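(* Let $\mathcal{T}=(V,E)$ be a rootless and leafless directed tree with countably infinite vertex set $V$, $\phi(x)$ the parent of $x\in V$, and $\mu$ a measure on $2^V$ with $0<\mu(\{x\})<\infty$ for every $x\in V$. Let $\{G_m\}_{m\in\mathbb{Z}}$ be a partition of $V$ with $G_{m+1}=\bigsqcup_{x\in G_m}\phi^{-1}(\{x\})$ for all $m\in\mathbb{Z}$, and let $\{\kappa_m\}_{m\in\mathbb{Z}}$ be positive integers and $\{\alpha_m\}_{m\in\mathbb{Z}}$ positive reals such that $\phi^{-1}(\{x\})$ has exactly $\kappa_m$ elements and $\mu(\{x\})=\alpha_m$ for all $x\in G_m$, $m\in\mathbb{Z}$. Define $\hat\kappa_m=\prod_{j=0}^{m-1}\kappa_j$ for $m\ge1$, $\hat\kappa_0=1$, $\hat\kappa_m=(\prod_{j=1}^{-m}\kappa_{-j})^{-1}$ for $m\le-1$. Suppose the composition operator $C_\phi$ in $L^2(\mu)$ is subnormal and $\nu$ is a representing measure of the two-sided Stieltjes moment sequence $\{\alpha_m\hat\kappa_m\}_{m\in\mathbb{Z}}$. Then $\operatorname{supp}\nu\neq\varnothing$ and: (i) $C_\phi\in\mathbf{B}(L^2(\mu))$ if and only if $\sup(\operatorname{supp}\nu)<\infty$; moreover, in this case $\|C_\phi\|^2=\sup(\operatorname{supp}\nu)$; (ii) for every positive real $c$, $\|C_\phi f\|\ge c\|f\|$ for all $f\in\mathcal{D}(C_\phi)$ if and only if $\inf(\operatorname{supp}\nu)\ge c^2$; (iii) $C_\phi$ is left semi-Fredholm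 if and only if $\inf(\operatorname{supp}\nu)>0$.
   Context: A directed tree is a connected directed graph without circuits in which every vertex has at most one parent; rootless: every vertex has a parent; leafless: every vertex has a child. $C_\phi f=f\circ\phi$ on $\mathcal{D}(C_\phi)=\{f\in L^2(\mu):f\circ\phi\in L^2(\mu)\}$. A two-sided sequence $\{a_m\}_{m\in\mathbb{Z}}$ is a two-sided Stieltjes moment sequence with representing measure $\nu$ if $\nu$ is a Borel measure on $(0,\infty)$ with $a_m=\int_{(0,\infty)}s^m\nu(\mathrm{d}s)$ for all $m\in\mathbb{Z}$; $\operatorname{supp}\nu$ is its closed support. $\mathbf{B}(L^2(\mu))$: bounded everywhere defined operators. A closed operator is left semi-Fredholm if it has closed range and finite-dimensional kernel. Subnormal: restriction of a normal operator in a larger Hilbert space, i.e. $\mathcal{D}(S)\subseteq\mathcal{D}(N)$ and $S=N$ on $\mathcal{D}(S)$. *)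

theory Defs
  imports "HOL-Analysis.Analysis"
begin

definition directed_tree :: "('v \<times> 'v) set \<Rightarrow> bool" where
  "directed_tree E \<longleftrightarrow>
     (\<forall>x y. (x, y) \<in> (E \<union> E\<inverse>)\<^sup>*) \<and>
     (\<forall>x. (x, x) \<notin> E\<^sup>+) \<and>
     (\<forall>x y z. (y, x) \<in> E \<and> (z, x) \<in> E \<longrightarrow> y = z)"

definition rootless :: "('v \<times> 'v) set \<Rightarrow> bool" where
  "rootless E \<longleftrightarrow> (\<forall>x. \<exists>y. (y, x) \<in> E)"

definition leafless :: "('v \<times> 'v) set \<Rightarrow> bool" where
  "leafless E \<longleftrightarrow> (\<forall>x. \<exists>y. (x, y) \<in> E)"

definition L2 :: "'v measure \<Rightarrow> ('v \<Rightarrow> complex) set" where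
  "L2 M = {f. (\<integral>\<^sup>+ x. ennreal ((cmod (f x))\<^sup>2) \<partial>M) < \<infinity>}"

definition L2norm :: "'v measure \<Rightarrow> ('v \<Rightarrow> complex) \<Rightarrow> real" where
  "L2norm M f = sqrt (enn2real (\<integral>\<^sup>+ x. ennreal ((cmod (f x))\<^sup>2) \<partial>M))"

definition comp_dom :: "'v measure \<Rightarrow> ('v \<Rightarrow> 'v) \<Rightarrow> ('v \<Rightarrow> complex) set" where
  "comp_dom M \<phi> = {f \<in> L2 M. f \<circ> \<phi> \<in> L2 M}"

definition comp_bounded :: "'v measure \<Rightarrow> ('v \<Rightarrow> 'v) \<Rightarrow> bool" where
  "comp_bounded M \<phi> \<longleftrightarrow> comp_dom M \<phi> = L2 M \<and>
     (\<exists>K. \<forall>f \<in> L2 M. L2norm M (f \<circ> \<phi>) \<le> K * L2norm M f)"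

definition comp_norm :: "'v measure \<Rightarrow> ('v \<Rightarrow> 'v) \<Rightarrow> real" where
  "comp_norm M \<phi> = Sup {L2norm M (f \<circ> \<phi>) | f. f \<in> L2 M \<and> L2norm M f \<le> 1}"

definition L2_converges :: "'v measure \<Rightarrow> (nat \<Rightarrow> 'v \<Rightarrow> complex) \<Rightarrow> ('v \<Rightarrow> complex) \<Rightarrow> bool" where
  "L2_converges M g h \<longleftrightarrow> (\<lambda>n. L2norm M (g n - h)) \<longlonglongrightarrow> 0"

definition comp_closed :: "'v measure \<Rightarrow> ('v \<Rightarrow> 'v) \<Rightarrow> bool" where
  "comp_closed M \<phi> \<longleftrightarrow>
     (\<forall>g f h. (\<forall>n. g n \<in> comp_dom M \<phi>) \<and> f \<in> L2 M \<and> h \<in> L2 M \<and>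
        L2_converges M g f \<and> L2_converges M (\<lambda>n. g n \<circ> \<phi>) h
        \<longrightarrow> f \<in> comp_dom M \<phi> \<and> f \<circ> \<phi> = h)"

definition comp_range :: "'v measure \<Rightarrow> ('v \<Rightarrow> 'v) \<Rightarrow> ('v \<Rightarrow> complex) set" where
  "comp_range M \<phi> = (\<lambda>f. f \<circ> \<phi>) ` comp_dom M \<phi>"

definition comp_kernel :: "'v measure \<Rightarrow> ('v \<Rightarrow> 'v) \<Rightarrow> ('v \<Rightarrow> complex) set" where
  "comp_kernel M \<phi> = {f \<in> comp_dom M \<phi>. f \<circ> \<phi> = (\<lambda>_. 0)}"

definition L2_closed_set :: "'v measure \<Rightarrow> ('v \<Rightarrow> complex) set \<Rightarrow> bool" where
  "L2_closed_set M A \<longleftrightarrow>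
     (\<forall>g h. (\<forall>n. g n \<in> A) \<and> h \<in> L2 M \<and> L2_converges M g h \<longrightarrow> h \<in> A)"

definition finite_dim :: "('v \<Rightarrow> complex) set \<Rightarrow> bool" where
  "finite_dim A \<longleftrightarrow> (\<exists>B. finite B \<and> (\<forall>f \<in> A. \<exists>c. f = (\<lambda>x. \<Sum>b\<in>B. c b * b x)))"

definition comp_left_semi_fredholm :: "'v measure \<Rightarrow> ('v \<Rightarrow> 'v) \<Rightarrow> bool" where
  "comp_left_semi_fredholm M \<phi> \<longleftrightarrow>
     comp_closed M \<phi> \<and> L2_closed_set M (comp_range M \<phi>) \<and> finite_dim (comp_kernel M \<phi>)"

section \<open>Hilbert spaces l^2(I) (every complex Hilbert space is unitarily equivalent to one)\<close>

definition l2 :: "('i \<Rightarrow> complex) set" where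
  "l2 = {f. (\<lambda>i. (cmod (f i))\<^sup>2) summable_on UNIV}"

definition l2inner :: "('i \<Rightarrow> complex) \<Rightarrow> ('i \<Rightarrow> complex) \<Rightarrow> complex" where
  "l2inner f g = (\<Sum>\<^sub>\<infinity>i. f i * cnj (g i))"

definition l2norm :: "('i \<Rightarrow> complex) \<Rightarrow> real" where
  "l2norm f = sqrt (\<Sum>\<^sub>\<infinity>i. (cmod (f i))\<^sup>2)"

definition l2_converges :: "(nat \<Rightarrow> 'i \<Rightarrow> complex) \<Rightarrow> ('i \<Rightarrow> complex) \<Rightarrow> bool" where
  "l2_converges g h \<longleftrightarrow> (\<lambda>n. l2norm (g n - h)) \<longlonglongrightarrow> 0"

definition lin_op :: "('i \<Rightarrow> complex) set \<Rightarrow> (('i \<Rightarrow> complex) \<Rightarrow> ('i \<Rightarrow> complex)) \<Rightarrow> bool" where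
  "lin_op D N \<longleftrightarrow> D \<subseteq> l2 \<and> (\<lambda>_. 0) \<in> D \<and>
     (\<forall>f\<in>D. \<forall>g\<in>D. \<forall>a b. (\<lambda>i. a * f i + b * g i) \<in> D \<and>
        N (\<lambda>i. a * f i + b * g i) = (\<lambda>i. a * N f i + b * N g i)) \<and>
     (\<forall>f\<in>D. N f \<in> l2)"

definition densely_defined :: "('i \<Rightarrow> complex) set \<Rightarrow> bool" where
  "densely_defined D \<longleftrightarrow> (\<forall>g\<in>l2. \<forall>e>0. \<exists>f\<in>D. l2norm (f - g) < e)"

definition closed_op :: "('i \<Rightarrow> complex) set \<Rightarrow> (('i \<Rightarrow> complex) \<Rightarrow> ('i \<Rightarrow> complex)) \<Rightarrow> bool" where
  "closed_op D N \<longleftrightarrow>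
     (\<forall>g f h. (\<forall>n. g n \<in> D) \<and> f \<in> l2 \<and> h \<in> l2 \<and> l2_converges g f \<and>
        l2_converges (\<lambda>n. N (g n)) h \<longrightarrow> f \<in> D \<and> N f = h)"

definition adj_dom :: "('i \<Rightarrow> complex) set \<Rightarrow> (('i \<Rightarrow> complex) \<Rightarrow> ('i \<Rightarrow> complex)) \<Rightarrow> ('i \<Rightarrow> complex) set" where
  "adj_dom D N = {g \<in> l2. \<exists>h\<in>l2. \<forall>f\<in>D. l2inner (N f) g = l2inner f h}"

definition adj_op :: "('i \<Rightarrow> complex) set \<Rightarrow> (('i \<Rightarrow> complex) \<Rightarrow> ('i \<Rightarrow> complex)) \<Rightarrow> ('i \<Rightarrow> complex) \<Rightarrow> ('i \<Rightarrow> complex)" where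
  "adj_op D N g = (SOME h. h \<in> l2 \<and> (\<forall>f\<in>D. l2inner (N f) g = l2inner f h))"

definition normal_op :: "('i \<Rightarrow> complex) set \<Rightarrow> (('i \<Rightarrow> complex) \<Rightarrow> ('i \<Rightarrow> complex)) \<Rightarrow> bool" where
  "normal_op D N \<longleftrightarrow> lin_op D N \<and> densely_defined D \<and> closed_op D N \<and>
     {f \<in> D. N f \<in> adj_dom D N} = {f \<in> adj_dom D N. adj_op D N f \<in> D} \<and>
     (\<forall>f \<in> {f \<in> D. N f \<in> adj_dom D N}. adj_op D N (N f) = N (adj_op D N f))"

definition comp_subnormal_in ::
  "'i itself \<Rightarrow> 'v measure \<Rightarrow> ('v \<Rightarrow> 'v) \<Rightarrow> bool" where
  "comp_subnormal_in _ M \<phi> \<longleftrightarrow>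
     (\<exists>(U :: ('v \<Rightarrow> complex) \<Rightarrow> ('i \<Rightarrow> complex)) D N.
        (\<forall>f\<in>L2 M. U f \<in> l2 \<and> l2norm (U f) = L2norm M f) \<and>
        (\<forall>f\<in>L2 M. \<forall>g\<in>L2 M. \<forall>a b. U (\<lambda>x. a * f x + b * g x) = (\<lambda>i. a * U f i + b * U g i)) \<and>
        normal_op D N \<and>
        (\<forall>f \<in> comp_dom M \<phi>. U f \<in> D \<and> N (U f) = U (f \<circ> \<phi>)))"

definition kappa_hat :: "(int \<Rightarrow> nat) \<Rightarrow> int \<Rightarrow> real" where
  "kappa_hat \<kappa> m =
     (if m \<ge> 1 then (\<Prod>j\<in>{0..m-1}. real (\<kappa> j))
      else if m = 0 then 1
      else inverse (\<Prod>j\<in>{1..-m}. real (\<kappa> (-j))))"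

definition representing_measure :: "(int \<Rightarrow> real) \<Rightarrow> real measure \<Rightarrow> bool" where
  "representing_measure a \<nu> \<longleftrightarrow> sets \<nu> = sets borel \<and> emeasure \<nu> {..0} = 0 \<and>
     (\<forall>m::int. ennreal (a m) = (\<integral>\<^sup>+ s. ennreal (s powi m) \<partial>\<nu>))"

definition msupp :: "real measure \<Rightarrow> real set" where
  "msupp \<nu> = {s. 0 < s \<and> (\<forall>U. open U \<and> s \<in> U \<longrightarrow> emeasure \<nu> U > 0)}"

end

theory Submission
  imports Defs
begin

(*
  Write C for C\<^sub>\<phi> and a m = \<alpha> m * kappa_hat \<kappa> m.  On the generation G m the image measure
  \<mu> \<circ> \<phi>\<^sup>-\<^sup>1 has density \<rho> = \<kappa> m * \<alpha> (m+1) / \<alpha> m = a (m+1) / a m with respect to \<mu>,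
  hence ||C f||^2 = \<integral> \<rho> |f|^2 d\<mu>.  Testing on point masses, C is bounded iff \<rho> is bounded,
  with ||C||^2 = sup \<rho>, and ||C f|| \<ge> c ||f|| iff c^2 \<le> \<rho>.  As \<phi> is onto, C is injective and
  closed, and its range is closed iff inf \<rho> > 0: otherwise normalised point masses at points where
  \<rho> < 2^-k add up to a function outside L^2 whose composition with \<phi> lies in L^2.

  On the moment side, a (m+1) \<le> R * a m for all m iff supp \<nu> \<subseteq> (0, R], and c * a m \<le> a (m+1)
  for all m iff supp \<nu> \<subseteq> [c, \<infinity>): one direction integrates the pointwise inequality, the other
  compares the geometric growth of a n with the mass \<nu> puts beyond a support point.  Thus \<rho> and
  supp \<nu> have the same upper and lower bounds, which gives all claims.  Subnormality of C only serves
  to produce \<nu> in the paper.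
*)

section \<open>Two-sided moment sequences\<close>

lemma AE_in_msupp:
  assumes sets: "sets \<nu> = sets borel" and nonpos: "emeasure \<nu> {..0::real} = 0"
  shows "AE s in \<nu>. s \<in> msupp \<nu>"
proof -
  define F where "F = {U::real set. open U \<and> emeasure \<nu> U = 0}"
  obtain F' where F': "F' \<subseteq> F" "countable F'" "\<Union>F' = \<Union>F"
    using Lindelof[of F] unfolding F_def by blast
  have "(\<Union>U\<in>F'. U) \<in> null_sets \<nu>"
    using F' sets by (intro null_sets_UN') (auto simp: F_def null_sets_def)
  moreover have "{..0::real} \<in> null_sets \<nu>" using nonpos sets by (auto simp: null_sets_def)
  ultimately have null: "\<Union>F \<union> {..0} \<in> null_sets \<nu>" using F'(3) by auto
  have "s \<in> \<Union>F \<union> {..0}" if "s \<notin> msupp \<nu>" for s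
    using that by (force simp: msupp_def F_def not_less)
  then show ?thesis by (intro AE_I'[OF null]) auto
qed

lemma mult_power_unbounded:
  fixes x u K :: real
  assumes "1 < x" "0 < u"
  shows "\<exists>n. K < u * x ^ n"
proof -
  obtain n where "K / u < x ^ n" using real_arch_pow[OF assms(1)] by blast
  then show ?thesis using assms(2) by (auto simp: field_simps)
qed

lemma powi_succ_le:
  fixes s R :: real assumes "0 < s" "s \<le> R" shows "s powi (m + 1) \<le> R * s powi m"
  using assms by (simp add: power_int_add_1' mult_right_mono)

lemma powi_succ_ge:
  fixes s c :: real assumes "0 < s" "c \<le> s" shows "c * s powi m \<le> s powi (m + 1)"
  using assms by (simp add: power_int_add_1' mult_right_mono)

locale two_sided_moments =
  fixes \<nu> :: "real measure" and a :: "int \<Rightarrow> real"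
  assumes sets_eq: "sets \<nu> = sets borel"
    and nonpos_null: "emeasure \<nu> {..0} = 0"
    and moment: "\<And>m. ennreal (a m) = (\<integral>\<^sup>+ s. ennreal (s powi m) \<partial>\<nu>)"
    and moment_pos: "\<And>m. 0 < a m"
begin

lemma powi_measurable[measurable]: "(\<lambda>s. ennreal (s powi m)) \<in> borel_measurable \<nu>"
  unfolding measurable_cong_sets[OF sets_eq refl]
  by (cases "0 \<le> m") (auto simp: power_int_def)

lemma emeasure_space_moment: "emeasure \<nu> (space \<nu>) = ennreal (a 0)"
  using moment[of 0] by simp

sublocale finite_measure \<nu>
  by standard (simp add: emeasure_space_moment)

lemma AE_msupp: "AE s in \<nu>. s \<in> msupp \<nu>"
  using AE_in_msupp[OF sets_eq nonpos_null] .

lemma msupp_pos: "s \<in> msupp \<nu> \<Longrightarrow> 0 < s"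
  by (simp add: msupp_def)

lemma msupp_nonempty: "msupp \<nu> \<noteq> {}"
proof
  assume "msupp \<nu> = {}"
  then have "AE s in \<nu>. False" using AE_msupp by simp
  then have "emeasure \<nu> (space \<nu>) = 0"
    using ae_filter_eq_bot_iff trivial_limit_def by metis
  then show False using moment_pos[of 0] by (simp add: emeasure_space_moment)
qed

lemma measure_msupp_nbhd_pos:
  assumes "t \<in> msupp \<nu>" "open U" "t \<in> U"
  shows "0 < measure \<nu> U"
  using assms by (auto simp: msupp_def emeasure_eq_measure)

lemma moment_le_moment_AE:
  assumes "0 \<le> c" "0 \<le> d" and le: "AE s in \<nu>. c * s powi m \<le> d * s powi n"
  shows "c * a m \<le> d * a n"
proof -
  have "ennreal (c * a m) = (\<integral>\<^sup>+ s. ennreal c * ennreal (s powi m) \<partial>\<nu>)"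
    using assms moment_pos[of m] by (simp add: nn_integral_cmult moment ennreal_mult)
  also have "\<dots> \<le> (\<integral>\<^sup>+ s. ennreal d * ennreal (s powi n) \<partial>\<nu>)"
    using le AE_msupp
    by (intro nn_integral_mono_AE, eventually_elim)
       (auto simp: msupp_def assms ennreal_mult[symmetric] intro!: ennreal_leI)
  also have "\<dots> = ennreal (d * a n)"
    using assms moment_pos[of n] by (simp add: nn_integral_cmult moment ennreal_mult)
  finally show ?thesis
    using assms moment_pos[of n] by simp
qed

lemma measure_mult_le_moment:
  assumes "U \<in> sets borel" "0 \<le> c" and le: "\<And>s. s \<in> U \<Longrightarrow> c \<le> s powi m"
  shows "c * measure \<nu> U \<le> a m"
proof -
  have "ennreal (c * measure \<nu> U) = (\<integral>\<^sup>+ s. ennreal c * indicator U s \<partial>\<nu>)"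
    using assms sets_eq by (simp add: nn_integral_cmult_indicator emeasure_eq_measure ennreal_mult)
  also have "\<dots> \<le> (\<integral>\<^sup>+ s. ennreal (s powi m) \<partial>\<nu>)"
    using le by (intro nn_integral_mono) (auto intro: ennreal_leI split: split_indicator)
  finally show ?thesis
    using moment_pos[of m] by (simp flip: moment add: ennreal_le_iff2)
qed

lemma msupp_le_of_moment_ratio_le:
  assumes ratio: "\<And>m. a (m + 1) \<le> R * a m" and t: "t \<in> msupp \<nu>"
  shows "t \<le> R"
proof (rule ccontr)
  assume "\<not> t \<le> R"
  have "0 < R" using ratio[of 0] moment_pos[of 0] moment_pos[of 1] by (smt (verit) mult_nonpos_nonneg)
  define t' where "t' = (t + R) / 2"
  have t': "R < t'" "t' < t" using \<open>\<not> t \<le> R\<close> by (auto simp: t'_def)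
  define u where "u = measure \<nu> {t'<..}"
  have "0 < u" using measure_msupp_nbhd_pos[OF t] t' by (simp add: u_def)
  have growth: "a (int n) \<le> R ^ n * a 0" for n
  proof (induction n)
    case (Suc n)
    have "a (int (Suc n)) \<le> R * a (int n)" using ratio[of "int n"] by (simp add: add.commute)
    also have "\<dots> \<le> R * (R ^ n * a 0)" using Suc \<open>0 < R\<close> by simp
    finally show ?case by (simp add: mult.assoc)
  qed simp
  have mass: "t' ^ n * u \<le> a (int n)" for n
    unfolding u_def using t' \<open>0 < R\<close>
    by (intro measure_mult_le_moment) (auto intro: power_mono)
  have "u * (t' / R) ^ n \<le> a 0" for n
  proof -
    have "R ^ n * (u * (t' / R) ^ n) = t' ^ n * u" using \<open>0 < R\<close> by (simp add: power_divide)
    also have "\<dots> \<le> R ^ n * a 0" using mass growth by (rule order_trans)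
    finally show ?thesis using \<open>0 < R\<close> by simp
  qed
  moreover obtain n where "a 0 < u * (t' / R) ^ n"
    using mult_power_unbounded[of "t' / R" u] t' \<open>0 < R\<close> \<open>0 < u\<close> by auto
  ultimately show False by (meson not_le)
qed

lemma msupp_ge_of_moment_ratio_ge:
  assumes "0 < c" and ratio: "\<And>m. c * a m \<le> a (m + 1)" and t: "t \<in> msupp \<nu>"
  shows "c \<le> t"
proof (rule ccontr)
  assume "\<not> c \<le> t"
  have "0 < t" using t msupp_pos by blast
  define t' where "t' = (t + c) / 2"
  have t': "t < t'" "t' < c" using \<open>\<not> c \<le> t\<close> by (auto simp: t'_def)
  define u where "u = measure \<nu> {0<..<t'}"
  have "0 < u" using measure_msupp_nbhd_pos[OF t] t' \<open>0 < t\<close> by (simp add: u_def)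
  have decay: "c ^ n * a (- int n) \<le> a 0" for n
  proof (induction n)
    case (Suc n)
    have "c * a (- int (Suc n)) \<le> a (- int n)" using ratio[of "- int (Suc n)"] by simp
    then have "c ^ Suc n * a (- int (Suc n)) \<le> c ^ n * a (- int n)"
      using \<open>0 < c\<close> by (simp add: mult.assoc mult_left_mono)
    then show ?case using Suc by simp
  qed simp
  have mass: "(1 / t') ^ n * u \<le> a (- int n)" for n
    unfolding u_def
  proof (intro measure_mult_le_moment)
    fix s assume "s \<in> {0<..<t'}"
    then have "inverse (t' ^ n) \<le> inverse (s ^ n)" by (auto intro: le_imp_inverse_le power_mono)
    then show "(1 / t') ^ n \<le> s powi - int n"
      by (simp add: power_int_minus power_one_over inverse_eq_divide)
  qed (use \<open>0 < t\<close> t' in \<open>simp_all add: less_imp_le\<close>)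
  have "u * (c / t') ^ n \<le> a 0" for n
  proof -
    have "u * (c / t') ^ n = c ^ n * ((1 / t') ^ n * u)" by (simp add: power_divide)
    also have "\<dots> \<le> c ^ n * a (- int n)" using mass \<open>0 < c\<close> by (simp add: mult_left_mono)
    also have "\<dots> \<le> a 0" by (rule decay)
    finally show ?thesis .
  qed
  moreover obtain n where "a 0 < u * (c / t') ^ n"
    using mult_power_unbounded[of "c / t'" u] t' \<open>0 < t\<close> \<open>0 < u\<close> by auto
  ultimately show False by (meson not_le)
qed

lemma moment_ratio_le_iff: "(\<forall>m. a (m + 1) \<le> R * a m) \<longleftrightarrow> (\<forall>t\<in>msupp \<nu>. t \<le> R)"
proof
  assume "\<forall>t\<in>msupp \<nu>. t \<le> R"
  moreover obtain t where "t \<in> msupp \<nu>" using msupp_nonempty by blast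
  ultimately have "0 \<le> R" using msupp_pos by force
  show "\<forall>m. a (m + 1) \<le> R * a m"
  proof
    fix m
    have "AE s in \<nu>. 1 * s powi (m + 1) \<le> R * s powi m"
      using AE_msupp by eventually_elim
        (use \<open>\<forall>t\<in>msupp \<nu>. t \<le> R\<close> msupp_pos in \<open>auto intro: powi_succ_le\<close>)
    then show "a (m + 1) \<le> R * a m" using moment_le_moment_AE[of 1 R] \<open>0 \<le> R\<close> by simp
  qed
qed (use msupp_le_of_moment_ratio_le in blast)

lemma moment_ratio_ge_iff: "(\<forall>m. c * a m \<le> a (m + 1)) \<longleftrightarrow> (\<forall>t\<in>msupp \<nu>. c \<le> t)"
proof (cases "0 < c")
  case True
  show ?thesis
  proof
    assume "\<forall>t\<in>msupp \<nu>. c \<le> t"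
    show "\<forall>m. c * a m \<le> a (m + 1)"
    proof
      fix m
      have "AE s in \<nu>. c * s powi m \<le> 1 * s powi (m + 1)"
        using AE_msupp by eventually_elim
          (use \<open>\<forall>t\<in>msupp \<nu>. c \<le> t\<close> msupp_pos in \<open>auto intro: powi_succ_ge\<close>)
      then show "c * a m \<le> a (m + 1)" using moment_le_moment_AE[of c 1] True by simp
    qed
  qed (use msupp_ge_of_moment_ratio_ge True in blast)
next
  case False
  then have "c * a m \<le> a (m + 1)" for m
    using moment_pos[of m] moment_pos[of "m + 1"] by (smt (verit) mult_nonpos_nonneg)
  moreover have "c \<le> t" if "t \<in> msupp \<nu>" for t
    using False msupp_pos[OF that] by linarith
  ultimately show ?thesis by blast
qed

end

section \<open>Composition operators on discrete measure spaces\<close>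

lemma geometric_tail_sums: "(\<lambda>k. if n \<le> k then (1/2::real) ^ k else 0) sums ((1/2) ^ n * 2)"
proof -
  have "(\<lambda>i. (1/2::real) ^ n * (1/2) ^ i) sums ((1/2) ^ n * (1 / (1 - 1/2)))"
    by (intro sums_mult geometric_sums) simp
  then have "(\<lambda>i. (\<lambda>k. if n \<le> k then (1/2::real) ^ k else 0) (i + n)) sums ((1/2) ^ n * 2)"
    by (simp add: power_add mult.commute)
  then show ?thesis by (subst (asm) sums_iff_shift) simp
qed

lemma same_upper_bounds_Sup_eq:
  fixes A B :: "real set"
  assumes "A \<noteq> {}" "B \<noteq> {}" and bounds: "\<And>R. (\<forall>x\<in>A. x \<le> R) \<longleftrightarrow> (\<forall>x\<in>B. x \<le> R)"
  shows "bdd_above A \<longleftrightarrow> bdd_above B" and "bdd_above A \<Longrightarrow> Sup A = Sup B"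
proof -
  show "bdd_above A \<longleftrightarrow> bdd_above B" using bounds by (simp add: bdd_above_def)
  assume "bdd_above A"
  then have "bdd_above B" using bounds by (simp add: bdd_above_def)
  have "\<forall>x\<in>A. x \<le> Sup A" "\<forall>x\<in>B. x \<le> Sup B"
    using \<open>bdd_above A\<close> \<open>bdd_above B\<close> by (auto intro: cSup_upper)
  then show "Sup A = Sup B"
    using assms \<open>bdd_above A\<close> \<open>bdd_above B\<close> by (intro antisym) (simp_all add: cSup_le_iff)
qed

definition spike :: "'v \<Rightarrow> complex \<Rightarrow> 'v \<Rightarrow> complex" where
  "spike y c = (\<lambda>x. if x = y then c else 0)"

text \<open>\<rho> is the Radon-Nikodym derivative \<open>h\<^sub>\<phi> = d(\<mu> \<circ> \<phi>\<^sup>-\<^sup>1)/d\<mu>\<close> of the paper.\<close>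

locale discrete_composition =
  fixes M :: "'v measure" and \<phi> :: "'v \<Rightarrow> 'v" and \<rho> :: "'v \<Rightarrow> real"
  assumes sets_M: "sets M = UNIV"
    and countable_UNIV: "countable (UNIV :: 'v set)"
    and emeasure_singleton_bounds: "\<And>x. 0 < emeasure M {x} \<and> emeasure M {x} < \<infinity>"
    and surj_\<phi>: "surj \<phi>"
    and emeasure_fibre: "\<And>y. emeasure M (\<phi> -` {y}) = ennreal (\<rho> y) * emeasure M {y}"
    and \<rho>_pos: "\<And>y. 0 < \<rho> y"
begin

abbreviation sq_integral :: "('v \<Rightarrow> complex) \<Rightarrow> ennreal" where
  "sq_integral f \<equiv> \<integral>\<^sup>+ x. ennreal ((cmod (f x))\<^sup>2) \<partial>M"

lemma emeasure_singleton: "emeasure M {y} = ennreal (measure M {y})"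
  using emeasure_singleton_bounds[of y] by (intro emeasure_eq_ennreal_measure) auto

lemma measure_singleton_pos: "0 < measure M {y}"
  using emeasure_singleton_bounds[of y] by (simp add: emeasure_singleton)

lemma sets_M_count_space: "sets M = sets (count_space UNIV)"
  using sets_M by simp

lemma space_M: "space M = UNIV"
  using sets.sets_into_space[of UNIV M] sets_M by auto

lemma measurable_M[measurable]: "f \<in> borel_measurable M"
  unfolding measurable_cong_sets[OF sets_M_count_space refl] by simp

lemma measurable_\<phi>: "\<phi> \<in> measurable M M"
  using measurable_cong_sets[OF sets_M_count_space sets_M_count_space] by auto

lemma nn_integral_singleton: "(\<integral>\<^sup>+ x. c * indicator {y} x \<partial>M) = c * ennreal (measure M {y})"
  using sets_M by (simp add: nn_integral_cmult_indicator emeasure_singleton)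

lemma distr_\<phi>_eq_density: "distr M M \<phi> = density M (\<lambda>y. ennreal (\<rho> y))"
proof (rule measure_eqI_countable[where A=UNIV])
  fix y :: 'v
  have "emeasure (distr M M \<phi>) {y} = ennreal (\<rho> y) * emeasure M {y}"
    using sets_M by (simp add: emeasure_distr[OF measurable_\<phi>] space_M emeasure_fibre)
  also have "\<dots> = (\<integral>\<^sup>+ x. ennreal (\<rho> y) * indicator {y} x \<partial>M)"
    by (simp add: nn_integral_singleton emeasure_singleton)
  also have "\<dots> = (\<integral>\<^sup>+ x. ennreal (\<rho> x) * indicator {y} x \<partial>M)"
    by (intro nn_integral_cong) (simp split: split_indicator)
  also have "\<dots> = emeasure (density M (\<lambda>y. ennreal (\<rho> y))) {y}"
    using sets_M by (simp add: emeasure_density)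
  finally show "emeasure (distr M M \<phi>) {y} = emeasure (density M (\<lambda>y. ennreal (\<rho> y))) {y}" .
qed (use sets_M countable_UNIV in auto)

lemma nn_integral_comp: "(\<integral>\<^sup>+ x. g (\<phi> x) \<partial>M) = (\<integral>\<^sup>+ y. ennreal (\<rho> y) * g y \<partial>M)"
proof -
  have "(\<integral>\<^sup>+ x. g (\<phi> x) \<partial>M) = (\<integral>\<^sup>+ y. g y \<partial>distr M M \<phi>)"
    by (simp add: nn_integral_distr[OF measurable_\<phi>])
  also have "\<dots> = (\<integral>\<^sup>+ y. ennreal (\<rho> y) * g y \<partial>M)"
    unfolding distr_\<phi>_eq_density by (rule nn_integral_density) auto
  finally show ?thesis .
qed

lemma sq_integral_comp:
  "sq_integral (f \<circ> \<phi>) = (\<integral>\<^sup>+ y. ennreal (\<rho> y) * ennreal ((cmod (f y))\<^sup>2) \<partial>M)"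
  using nn_integral_comp[of "\<lambda>y. ennreal ((cmod (f y))\<^sup>2)"] by simp

lemma sq_integral_comp_le:
  assumes "\<And>y. \<rho> y \<le> B" shows "sq_integral (f \<circ> \<phi>) \<le> ennreal B * sq_integral f"
proof -
  have "sq_integral (f \<circ> \<phi>) \<le> (\<integral>\<^sup>+ y. ennreal B * ennreal ((cmod (f y))\<^sup>2) \<partial>M)"
    unfolding sq_integral_comp by (intro nn_integral_mono mult_right_mono ennreal_leI assms) auto
  also have "\<dots> = ennreal B * sq_integral f" by (simp add: nn_integral_cmult)
  finally show ?thesis .
qed

lemma sq_integral_comp_ge:
  assumes "\<And>y. b \<le> \<rho> y" shows "ennreal b * sq_integral f \<le> sq_integral (f \<circ> \<phi>)"
proof -
  have "ennreal b * sq_integral f = (\<integral>\<^sup>+ y. ennreal b * ennreal ((cmod (f y))\<^sup>2) \<partial>M)"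
    by (simp add: nn_integral_cmult)
  also have "\<dots> \<le> sq_integral (f \<circ> \<phi>)"
    unfolding sq_integral_comp by (intro nn_integral_mono mult_right_mono ennreal_leI assms) auto
  finally show ?thesis .
qed

lemma L2norm_ge_point:
  assumes "f \<in> L2 M" shows "cmod (f y) * sqrt (measure M {y}) \<le> L2norm M f"
proof -
  have "ennreal ((cmod (f y))\<^sup>2 * measure M {y}) = (\<integral>\<^sup>+ x. ennreal ((cmod (f y))\<^sup>2) * indicator {y} x \<partial>M)"
    by (simp add: nn_integral_singleton ennreal_mult)
  also have "\<dots> \<le> sq_integral f"
    by (intro nn_integral_mono) (auto split: split_indicator)
  finally have "enn2real (ennreal ((cmod (f y))\<^sup>2 * measure M {y})) \<le> enn2real (sq_integral f)"
    using assms by (intro enn2real_mono) (auto simp: L2_def)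
  then have "(cmod (f y))\<^sup>2 * measure M {y} \<le> enn2real (sq_integral f)"
    by simp
  then have "sqrt ((cmod (f y))\<^sup>2 * measure M {y}) \<le> L2norm M f"
    unfolding L2norm_def by (rule real_sqrt_le_mono)
  then show ?thesis by (simp add: real_sqrt_mult)
qed

lemma L2_diff:
  assumes "f \<in> L2 M" "g \<in> L2 M" shows "f - g \<in> L2 M"
proof -
  have "ennreal ((cmod ((f - g) x))\<^sup>2) \<le> 2 * ennreal ((cmod (f x))\<^sup>2) + 2 * ennreal ((cmod (g x))\<^sup>2)"
    for x
  proof -
    have "(cmod (f x - g x))\<^sup>2 \<le> (cmod (f x) + cmod (g x))\<^sup>2"
      by (intro power_mono norm_triangle_ineq4) auto
    also have "\<dots> \<le> 2 * (cmod (f x))\<^sup>2 + 2 * (cmod (g x))\<^sup>2"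
      using zero_le_power2[of "cmod (f x) - cmod (g x)"] by (simp add: power2_sum power2_diff)
    finally have "ennreal ((cmod (f x - g x))\<^sup>2) \<le> ennreal (2 * (cmod (f x))\<^sup>2 + 2 * (cmod (g x))\<^sup>2)"
      by (rule ennreal_leI)
    then show ?thesis by (simp add: ennreal_plus ennreal_mult')
  qed
  then have "sq_integral (f - g) \<le> (\<integral>\<^sup>+ x. 2 * ennreal ((cmod (f x))\<^sup>2) + 2 * ennreal ((cmod (g x))\<^sup>2) \<partial>M)"
    by (intro nn_integral_mono)
  also have "\<dots> = 2 * sq_integral f + 2 * sq_integral g"
    by (simp add: nn_integral_add nn_integral_cmult)
  also have "\<dots> < \<infinity>" using assms by (simp add: L2_def ennreal_mult_less_top)
  finally show ?thesis by (simp add: L2_def)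
qed

lemma L2_converges_pointwise:
  assumes "L2_converges M g f" "\<And>n. g n \<in> L2 M" "f \<in> L2 M"
  shows "(\<lambda>n. g n y) \<longlonglongrightarrow> f y"
proof -
  have "(\<lambda>n. g n y - f y) \<longlonglongrightarrow> 0"
  proof (rule Lim_null_comparison)
    show "\<forall>\<^sub>F n in sequentially. norm (g n y - f y) \<le> L2norm M (g n - f) / sqrt (measure M {y})"
      using L2norm_ge_point[OF L2_diff[OF assms(2,3)], of _ y] measure_singleton_pos[of y]
      by (simp add: field_simps)
    show "(\<lambda>n. L2norm M (g n - f) / sqrt (measure M {y})) \<longlonglongrightarrow> 0"
      using assms(1) unfolding L2_converges_def by (intro tendsto_divide_zero)
  qed
  then show ?thesis by (simp add: LIM_zero_iff)
qed

lemma sq_integral_spike: "sq_integral (spike y c) = ennreal ((cmod c)\<^sup>2 * measure M {y})"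
proof -
  have "sq_integral (spike y c) = (\<integral>\<^sup>+ x. ennreal ((cmod c)\<^sup>2) * indicator {y} x \<partial>M)"
    by (intro nn_integral_cong) (auto simp: spike_def split: split_indicator)
  then show ?thesis by (simp add: nn_integral_singleton ennreal_mult)
qed

lemma sq_integral_spike_comp:
  "sq_integral (\<lambda>x. spike y c (\<phi> x)) = ennreal (\<rho> y * (cmod c)\<^sup>2 * measure M {y})"
proof -
  have "sq_integral (spike y c \<circ> \<phi>) = (\<integral>\<^sup>+ x. ennreal (\<rho> y * (cmod c)\<^sup>2) * indicator {y} x \<partial>M)"
    unfolding sq_integral_comp using \<rho>_pos[of y]
    by (intro nn_integral_cong) (auto simp: spike_def ennreal_mult split: split_indicator)
  then show ?thesis using \<rho>_pos[of y] by (simp add: nn_integral_singleton ennreal_mult)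
qed

lemma spike_in_comp_dom: "spike y c \<in> comp_dom M \<phi>"
  by (simp add: comp_dom_def L2_def sq_integral_spike sq_integral_spike_comp flip: comp_def)

lemma L2norm_spike: "L2norm M (spike y c) = cmod c * sqrt (measure M {y})"
  using measure_singleton_pos[of y] by (simp add: L2norm_def sq_integral_spike real_sqrt_mult)

lemma L2norm_spike_comp: "L2norm M (spike y c \<circ> \<phi>) = sqrt (\<rho> y) * cmod c * sqrt (measure M {y})"
  using measure_singleton_pos[of y] \<rho>_pos[of y]
  by (simp add: L2norm_def sq_integral_spike_comp real_sqrt_mult)

lemma L2_zero: "(\<lambda>_. 0) \<in> L2 M" and L2norm_zero: "L2norm M (\<lambda>_. 0) = 0"
  by (auto simp: L2_def L2norm_def)

lemma rho_le_comp_norm_sq: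
  assumes "comp_bounded M \<phi>" shows "\<rho> y \<le> (comp_norm M \<phi>)\<^sup>2"
proof -
  define A where "A = {L2norm M (f \<circ> \<phi>) | f. f \<in> L2 M \<and> L2norm M f \<le> 1}"
  obtain K where K: "\<And>f. f \<in> L2 M \<Longrightarrow> L2norm M (f \<circ> \<phi>) \<le> K * L2norm M f"
    using assms unfolding comp_bounded_def by blast
  have "z \<le> \<bar>K\<bar>" if "z \<in> A" for z
  proof -
    obtain f where f: "f \<in> L2 M" "L2norm M f \<le> 1" "z = L2norm M (f \<circ> \<phi>)"
      using \<open>z \<in> A\<close> unfolding A_def by blast
    have "0 \<le> L2norm M f" by (simp add: L2norm_def)
    have "z \<le> K * L2norm M f" using K[OF f(1)] f(3) by simp
    also have "\<dots> \<le> \<bar>K\<bar> * L2norm M f" using \<open>0 \<le> L2norm M f\<close> by (simp add: mult_right_mono)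
    also have "\<dots> \<le> \<bar>K\<bar>" using f(2) \<open>0 \<le> L2norm M f\<close> by (simp add: mult_left_le)
    finally show ?thesis .
  qed
  then have "bdd_above A" by (rule bdd_aboveI)
  define c where "c = complex_of_real (1 / sqrt (measure M {y}))"
  have "L2norm M (spike y c) = 1" "L2norm M (spike y c \<circ> \<phi>) = sqrt (\<rho> y)"
    using measure_singleton_pos[of y]
    by (simp_all add: c_def L2norm_spike L2norm_spike_comp norm_divide)
  then have "sqrt (\<rho> y) \<in> A"
    unfolding A_def mem_Collect_eq using spike_in_comp_dom[of y c]
    by (intro exI[of _ "spike y c"]) (simp add: comp_dom_def)
  then have "sqrt (\<rho> y) \<le> comp_norm M \<phi>"
    using \<open>bdd_above A\<close> by (simp add: comp_norm_def A_def cSup_upper)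
  then have "(sqrt (\<rho> y))\<^sup>2 \<le> (comp_norm M \<phi>)\<^sup>2"
    using \<rho>_pos[of y] by (intro power_mono) auto
  then show ?thesis using \<rho>_pos[of y] by simp
qed

lemma comp_bounded_norm_le:
  assumes B: "\<And>y. \<rho> y \<le> B"
  shows "comp_bounded M \<phi>" and "(comp_norm M \<phi>)\<^sup>2 \<le> B"
proof -
  have "0 \<le> B" using B[of undefined] \<rho>_pos[of undefined] by simp
  have bound: "f \<circ> \<phi> \<in> L2 M \<and> L2norm M (f \<circ> \<phi>) \<le> sqrt B * L2norm M f" if "f \<in> L2 M" for f
  proof -
    have le: "sq_integral (f \<circ> \<phi>) \<le> ennreal B * sq_integral f" by (rule sq_integral_comp_le[OF B])
    moreover have fin: "ennreal B * sq_integral f < top"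
      using that by (simp add: L2_def ennreal_mult_less_top)
    ultimately have "f \<circ> \<phi> \<in> L2 M" by (simp add: L2_def)
    moreover have "enn2real (sq_integral (f \<circ> \<phi>)) \<le> B * enn2real (sq_integral f)"
      using enn2real_mono[OF le fin] \<open>0 \<le> B\<close> by (simp add: enn2real_mult)
    then have "sqrt (enn2real (sq_integral (f \<circ> \<phi>))) \<le> sqrt B * sqrt (enn2real (sq_integral f))"
      by (metis real_sqrt_le_mono real_sqrt_mult)
    ultimately show ?thesis by (simp add: L2norm_def)
  qed
  then show "comp_bounded M \<phi>"
    unfolding comp_bounded_def comp_dom_def by blast
  define A where "A = {L2norm M (f \<circ> \<phi>) | f. f \<in> L2 M \<and> L2norm M f \<le> 1}"
  have "z \<le> sqrt B" if "z \<in> A" for z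
  proof -
    obtain f where f: "f \<in> L2 M" "L2norm M f \<le> 1" "z = L2norm M (f \<circ> \<phi>)"
      using \<open>z \<in> A\<close> unfolding A_def by blast
    have "z \<le> sqrt B * L2norm M f" using bound f by simp
    also have "\<dots> \<le> sqrt B" using f(2) \<open>0 \<le> B\<close> by (simp add: mult_left_le)
    finally show ?thesis .
  qed
  moreover have "0 \<in> A"
    unfolding A_def mem_Collect_eq using L2_zero L2norm_zero
    by (intro exI[of _ "\<lambda>_. 0"]) (simp add: o_def)
  ultimately have "0 \<le> Sup A" "Sup A \<le> sqrt B"
    by (auto intro!: cSup_upper cSup_least bdd_aboveI)
  then have "(Sup A)\<^sup>2 \<le> (sqrt B)\<^sup>2" by (intro power_mono)
  then show "(comp_norm M \<phi>)\<^sup>2 \<le> B" using \<open>0 \<le> B\<close> by (simp add: comp_norm_def A_def)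
qed

lemma comp_bounded_iff_bdd_above: "comp_bounded M \<phi> \<longleftrightarrow> bdd_above (range \<rho>)"
proof
  assume "comp_bounded M \<phi>"
  show "bdd_above (range \<rho>)"
    by (rule bdd_aboveI2[where M = "(comp_norm M \<phi>)\<^sup>2"]) (rule rho_le_comp_norm_sq[OF \<open>comp_bounded M \<phi>\<close>])
next
  assume "bdd_above (range \<rho>)"
  then obtain B where "\<And>y. \<rho> y \<le> B" by (auto simp: bdd_above_def)
  then show "comp_bounded M \<phi>" by (rule comp_bounded_norm_le(1))
qed

lemma comp_norm_sq_eq_Sup:
  assumes "comp_bounded M \<phi>" shows "(comp_norm M \<phi>)\<^sup>2 = Sup (range \<rho>)"
proof (rule antisym)
  show "Sup (range \<rho>) \<le> (comp_norm M \<phi>)\<^sup>2"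
    using rho_le_comp_norm_sq[OF assms] by (auto intro: cSUP_least)
  have "bdd_above (range \<rho>)" using assms by (simp add: comp_bounded_iff_bdd_above)
  then show "(comp_norm M \<phi>)\<^sup>2 \<le> Sup (range \<rho>)"
    by (intro comp_bounded_norm_le(2) cSUP_upper[OF UNIV_I])
qed

lemma comp_bounded_below_iff:
  assumes "0 < c"
  shows "(\<forall>f \<in> comp_dom M \<phi>. c * L2norm M f \<le> L2norm M (f \<circ> \<phi>)) \<longleftrightarrow> (\<forall>y. c\<^sup>2 \<le> \<rho> y)"
proof
  assume below: "\<forall>f \<in> comp_dom M \<phi>. c * L2norm M f \<le> L2norm M (f \<circ> \<phi>)"
  show "\<forall>y. c\<^sup>2 \<le> \<rho> y"
  proof
    fix y
    have "c * L2norm M (spike y 1) \<le> L2norm M (spike y 1 \<circ> \<phi>)"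
      using below spike_in_comp_dom by blast
    then have "c \<le> sqrt (\<rho> y)"
      using measure_singleton_pos[of y] by (simp add: L2norm_spike L2norm_spike_comp)
    then have "c\<^sup>2 \<le> (sqrt (\<rho> y))\<^sup>2" using \<open>0 < c\<close> by (intro power_mono) auto
    then show "c\<^sup>2 \<le> \<rho> y" using \<rho>_pos[of y] by simp
  qed
next
  assume "\<forall>y. c\<^sup>2 \<le> \<rho> y"
  show "\<forall>f \<in> comp_dom M \<phi>. c * L2norm M f \<le> L2norm M (f \<circ> \<phi>)"
  proof
    fix f assume "f \<in> comp_dom M \<phi>"
    have "ennreal (c\<^sup>2) * sq_integral f \<le> sq_integral (f \<circ> \<phi>)"
      using \<open>\<forall>y. c\<^sup>2 \<le> \<rho> y\<close> by (intro sq_integral_comp_ge) auto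
    then have "enn2real (ennreal (c\<^sup>2) * sq_integral f) \<le> enn2real (sq_integral (f \<circ> \<phi>))"
      using \<open>f \<in> comp_dom M \<phi>\<close> by (intro enn2real_mono) (auto simp: comp_dom_def L2_def)
    then have "sqrt (c\<^sup>2 * enn2real (sq_integral f)) \<le> sqrt (enn2real (sq_integral (f \<circ> \<phi>)))"
      by (simp add: enn2real_mult)
    then show "c * L2norm M f \<le> L2norm M (f \<circ> \<phi>)"
      using \<open>0 < c\<close> by (simp add: L2norm_def real_sqrt_mult)
  qed
qed

lemma comp_\<phi>_cancel:
  assumes "f \<circ> \<phi> = g \<circ> \<phi>" shows "f = g"
proof
  fix y
  have "f (\<phi> (inv \<phi> y)) = g (\<phi> (inv \<phi> y))" using assms by (simp add: fun_eq_iff)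
  then show "f y = g y" by (simp add: surj_f_inv_f[OF surj_\<phi>])
qed

lemma comp_closed: "comp_closed M \<phi>"
  unfolding comp_closed_def
proof (intro allI impI)
  fix g f h
  assume H: "(\<forall>n. g n \<in> comp_dom M \<phi>) \<and> f \<in> L2 M \<and> h \<in> L2 M \<and> L2_converges M g f \<and>
    L2_converges M (\<lambda>n. g n \<circ> \<phi>) h"
  have lim_f: "(\<lambda>n. g n (\<phi> x)) \<longlonglongrightarrow> f (\<phi> x)" for x
    using H L2_converges_pointwise[of g f] by (auto simp: comp_dom_def)
  have lim_h: "(\<lambda>n. g n (\<phi> x)) \<longlonglongrightarrow> h x" for x
    using H L2_converges_pointwise[of "\<lambda>n. g n \<circ> \<phi>" h x] by (auto simp: comp_dom_def)
  have "f \<circ> \<phi> = h"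
    using LIMSEQ_unique[OF lim_f lim_h] by (simp add: fun_eq_iff)
  then show "f \<in> comp_dom M \<phi> \<and> f \<circ> \<phi> = h" using H by (simp add: comp_dom_def)
qed

lemma finite_dim_comp_kernel: "finite_dim (comp_kernel M \<phi>)"
proof -
  have "comp_kernel M \<phi> \<subseteq> {\<lambda>_. 0}"
    using comp_\<phi>_cancel[of _ "\<lambda>_. 0"] by (auto simp: comp_kernel_def o_def)
  then show ?thesis unfolding finite_dim_def by (intro exI[of _ "{}"]) auto
qed

lemma comp_range_closed:
  assumes "0 < b" and b: "\<And>y. b \<le> \<rho> y"
  shows "L2_closed_set M (comp_range M \<phi>)"
  unfolding L2_closed_set_def
proof (intro allI impI)
  fix g h assume H: "(\<forall>n. g n \<in> comp_range M \<phi>) \<and> h \<in> L2 M \<and> L2_converges M g h"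
  then have "\<forall>n. \<exists>f. f \<in> comp_dom M \<phi> \<and> g n = f \<circ> \<phi>" by (auto simp: comp_range_def)
  then obtain fs where fs: "\<And>n. fs n \<in> comp_dom M \<phi>" "\<And>n. g n = fs n \<circ> \<phi>" by metis
  have lim: "(\<lambda>n. g n x) \<longlonglongrightarrow> h x" for x
    using H fs L2_converges_pointwise[of g h x] by (auto simp: comp_dom_def)
  define f where "f = h \<circ> inv \<phi>"
  have lim_f: "(\<lambda>n. g n x) \<longlonglongrightarrow> f (\<phi> x)" for x
    using lim[of "inv \<phi> (\<phi> x)"] fs(2) by (simp add: f_def surj_f_inv_f[OF surj_\<phi>])
  have "f \<circ> \<phi> = h"
    using LIMSEQ_unique[OF lim_f lim] by (simp add: fun_eq_iff)
  then have "ennreal b * sq_integral f \<le> sq_integral h"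
    using sq_integral_comp_ge[of b f, OF b] by simp
  then have "ennreal b * sq_integral f < top" using H by (auto simp: L2_def intro: le_less_trans)
  then have "f \<in> L2 M" using \<open>0 < b\<close> by (auto simp: L2_def ennreal_mult_less_top)
  then have "f \<in> comp_dom M \<phi>" using \<open>f \<circ> \<phi> = h\<close> H by (simp add: comp_dom_def)
  then show "h \<in> comp_range M \<phi>" using \<open>f \<circ> \<phi> = h\<close> unfolding comp_range_def by blast
qed

lemma obtain_inj_seq_rho_small:
  assumes small: "\<And>b. 0 < b \<Longrightarrow> \<exists>y. \<rho> y < b"
  obtains v where "inj v" "\<And>k. \<rho> (v k) < (1/2) ^ k"
proof -
  have "\<exists>y. \<rho> y < (1/2) ^ 0" using small[of 1] by simp
  moreover have "\<exists>y'. \<rho> y' < (1/2) ^ Suc k \<and> \<rho> y' < \<rho> y" for y k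
    using small[of "min ((1/2) ^ Suc k) (\<rho> y)"] \<rho>_pos[of y] by simp
  ultimately obtain v where v: "\<And>k. \<rho> (v k) < (1/2) ^ k" "\<And>k. \<rho> (v (Suc k)) < \<rho> (v k)"
    using dependent_nat_choice[of "\<lambda>k y. \<rho> y < (1/2) ^ k" "\<lambda>_ y y'. \<rho> y' < \<rho> y"] by blast
  have "strict_mono (\<lambda>k. - \<rho> (v k))" using v(2) by (intro strict_monoI_Suc) simp
  then have "inj v"
  proof (intro injI)
    fix k l assume "v k = v l"
    with \<open>strict_mono (\<lambda>k. - \<rho> (v k))\<close> show "k = l" using strict_mono_eq by fastforce
  qed
  then show ?thesis using v(1) that by blast
qed

lemma nn_integral_supported_on_range:
  assumes "inj v" and supp: "\<And>x. x \<notin> range v \<Longrightarrow> g x = 0"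
  shows "(\<integral>\<^sup>+ x. g x \<partial>M) = (\<Sum>k. g (v k) * ennreal (measure M {v k}))"
proof -
  have expand: "g x = (\<Sum>k. g (v k) * indicator {v k} x)" for x
  proof (cases "x \<in> range v")
    case True
    then obtain j where j: "x = v j" by auto
    have "(\<Sum>k. g (v k) * indicator {v k} x) = (\<Sum>k\<in>{j}. g (v k) * indicator {v k} x)"
      by (rule suminf_finite) (use \<open>inj v\<close> j in \<open>auto simp: inj_eq split: split_indicator\<close>)
    then show ?thesis using j by simp
  next
    case False
    then have "\<And>k. indicator {v k} x = (0::ennreal)" by (auto simp: indicator_def)
    then show ?thesis using supp[OF False] by simp
  qed
  have "(\<integral>\<^sup>+ x. g x \<partial>M) = (\<integral>\<^sup>+ x. (\<Sum>k. g (v k) * indicator {v k} x) \<partial>M)"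
    by (intro nn_integral_cong expand)
  also have "\<dots> = (\<Sum>k. \<integral>\<^sup>+ x. g (v k) * indicator {v k} x \<partial>M)"
    by (rule nn_integral_suminf) simp
  finally show ?thesis by (simp add: nn_integral_singleton)
qed

definition spikes :: "(nat \<Rightarrow> 'v) \<Rightarrow> nat set \<Rightarrow> 'v \<Rightarrow> complex" where
  "spikes v K y = (if y \<in> v ` K then complex_of_real (1 / sqrt (measure M {y})) else 0)"

lemma sq_integral_spikes:
  assumes "inj v" and h: "\<And>y. cmod (h y) = cmod (spikes v K y)"
  shows "sq_integral h = (\<Sum>k. ennreal (if k \<in> K then 1 else 0))"
    and "sq_integral (h \<circ> \<phi>) = (\<Sum>k. ennreal (if k \<in> K then \<rho> (v k) else 0))"
proof -
  have mem: "v k \<in> v ` K \<longleftrightarrow> k \<in> K" for k using \<open>inj v\<close> by (auto simp: inj_eq)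
  have sq: "(cmod (h y))\<^sup>2 = (if y \<in> v ` K then 1 / measure M {y} else 0)" for y
    using h[of y] measure_singleton_pos[of y] by (simp add: spikes_def power_divide norm_divide)
  have "sq_integral h = (\<integral>\<^sup>+ y. ennreal (if y \<in> v ` K then 1 / measure M {y} else 0) \<partial>M)"
    by (simp add: sq)
  also have "\<dots> = (\<Sum>k. ennreal (if v k \<in> v ` K then 1 / measure M {v k} else 0) * ennreal (measure M {v k}))"
    by (rule nn_integral_supported_on_range[OF \<open>inj v\<close>]) auto
  also have "\<dots> = (\<Sum>k. ennreal (if k \<in> K then 1 else 0))"
  proof (intro suminf_cong)
    fix k
    show "ennreal (if v k \<in> v ` K then 1 / measure M {v k} else 0) * ennreal (measure M {v k})
        = ennreal (if k \<in> K then 1 else 0)"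
      using measure_singleton_pos[of "v k"] by (cases "k \<in> K") (simp_all add: mem flip: ennreal_mult)
  qed
  finally show "sq_integral h = (\<Sum>k. ennreal (if k \<in> K then 1 else 0))" .
  have "sq_integral (h \<circ> \<phi>)
      = (\<integral>\<^sup>+ y. ennreal (\<rho> y) * ennreal (if y \<in> v ` K then 1 / measure M {y} else 0) \<partial>M)"
    unfolding sq_integral_comp by (simp add: sq)
  also have "\<dots> = (\<Sum>k. ennreal (\<rho> (v k)) * ennreal (if v k \<in> v ` K then 1 / measure M {v k} else 0)
      * ennreal (measure M {v k}))"
    by (rule nn_integral_supported_on_range[OF \<open>inj v\<close>]) auto
  also have "\<dots> = (\<Sum>k. ennreal (if k \<in> K then \<rho> (v k) else 0))"
  proof (intro suminf_cong)
    fix k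
    show "ennreal (\<rho> (v k)) * ennreal (if v k \<in> v ` K then 1 / measure M {v k} else 0)
        * ennreal (measure M {v k}) = ennreal (if k \<in> K then \<rho> (v k) else 0)"
      using measure_singleton_pos[of "v k"] \<rho>_pos[of "v k"]
      by (cases "k \<in> K") (simp_all add: mem mult.assoc flip: ennreal_mult)
  qed
  finally show "sq_integral (h \<circ> \<phi>) = (\<Sum>k. ennreal (if k \<in> K then \<rho> (v k) else 0))" .
qed

context
  fixes v :: "nat \<Rightarrow> 'v"
  assumes inj_v: "inj v" and \<rho>_v: "\<And>k. \<rho> (v k) < (1/2) ^ k"
begin

lemma sq_integral_comp_spikes_le:
  assumes "K \<subseteq> {n..}" and h: "\<And>y. cmod (h y) = cmod (spikes v K y)"
  shows "sq_integral (h \<circ> \<phi>) \<le> ennreal ((1/2) ^ n * 2)"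
proof -
  have "ennreal (if k \<in> K then \<rho> (v k) else 0) \<le> ennreal (if n \<le> k then (1/2) ^ k else 0)" for k
    using \<rho>_v[of k] \<open>K \<subseteq> {n..}\<close> by (auto intro: ennreal_leI)
  then have "(\<Sum>k. ennreal (if k \<in> K then \<rho> (v k) else 0)) \<le> (\<Sum>k. ennreal (if n \<le> k then (1/2) ^ k else 0))"
    by (intro suminf_le) auto
  also have "\<dots> = ennreal ((1/2) ^ n * 2)"
    by (rule suminf_ennreal_eq[OF _ geometric_tail_sums]) simp
  finally show ?thesis unfolding sq_integral_spikes(2)[OF inj_v h] .
qed

lemma spikes_not_in_L2: "spikes v UNIV \<notin> L2 M"
proof -
  have "sq_integral (spikes v UNIV) = (\<Sum>k. ennreal 1)"
    using sq_integral_spikes(1)[OF inj_v] by simp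
  also have "\<dots> = top"
    using summable_iff_suminf_neq_top[of "\<lambda>_. 1::real"] by (simp add: summable_const_iff)
  finally show ?thesis by (simp add: L2_def)
qed

lemma spikes_comp_in_L2: "spikes v UNIV \<circ> \<phi> \<in> L2 M"
  using sq_integral_comp_spikes_le[of UNIV 0 "spikes v UNIV"] by (auto simp: L2_def le_less_trans)

lemma spikes_truncation_in_comp_dom: "spikes v {..<n} \<in> comp_dom M \<phi>"
proof -
  have "sq_integral (spikes v {..<n}) = (\<Sum>k. ennreal (if k \<in> {..<n} then 1 else 0))"
    by (rule sq_integral_spikes(1)[OF inj_v]) simp
  also have "\<dots> = (\<Sum>k<n. ennreal (if k \<in> {..<n} then 1 else 0))"
    by (rule suminf_finite) auto
  finally have "sq_integral (spikes v {..<n}) < top" by (simp add: of_nat_less_top)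
  moreover have "sq_integral (spikes v {..<n} \<circ> \<phi>) \<le> ennreal ((1/2) ^ 0 * 2)"
    by (rule sq_integral_comp_spikes_le) auto
  ultimately show ?thesis by (auto simp: comp_dom_def L2_def le_less_trans)
qed

lemma L2_converges_spikes_truncation:
  "L2_converges M (\<lambda>n. spikes v {..<n} \<circ> \<phi>) (spikes v UNIV \<circ> \<phi>)"
  unfolding L2_converges_def
proof (rule Lim_null_comparison)
  show "(\<lambda>n. sqrt ((1/2) ^ n * 2)) \<longlonglongrightarrow> 0"
    using tendsto_real_sqrt[OF tendsto_mult_left_zero[OF LIMSEQ_power_zero[of "1/2::real"]], of 2]
    by simp
  show "\<forall>\<^sub>F n in sequentially.
      norm (L2norm M ((spikes v {..<n} \<circ> \<phi>) - (spikes v UNIV \<circ> \<phi>))) \<le> sqrt ((1/2) ^ n * 2)"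
  proof (intro always_eventually allI)
    fix n
    let ?d = "spikes v {..<n} - spikes v UNIV"
    have "cmod (?d y) = cmod (spikes v {n..} y)" for y
      using inj_v by (auto simp: spikes_def inj_image_mem_iff inj_eq not_less)
    then have "sq_integral (?d \<circ> \<phi>) \<le> ennreal ((1/2) ^ n * 2)"
      by (intro sq_integral_comp_spikes_le) auto
    then have "enn2real (sq_integral (?d \<circ> \<phi>)) \<le> (1/2) ^ n * 2"
      by (simp add: enn2real_leI)
    then show "norm (L2norm M ((spikes v {..<n} \<circ> \<phi>) - (spikes v UNIV \<circ> \<phi>))) \<le> sqrt ((1/2) ^ n * 2)"
      by (simp add: L2norm_def fun_diff_def)
  qed
qed

end

lemma comp_range_not_closed:
  assumes small: "\<And>b. 0 < b \<Longrightarrow> \<exists>y. \<rho> y < b"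
  shows "\<not> L2_closed_set M (comp_range M \<phi>)"
proof
  assume closed: "L2_closed_set M (comp_range M \<phi>)"
  obtain v where "inj v" and v: "\<And>k. \<rho> (v k) < (1/2) ^ k"
    using obtain_inj_seq_rho_small small by blast
  have "\<forall>n. spikes v {..<n} \<circ> \<phi> \<in> comp_range M \<phi>"
    using spikes_truncation_in_comp_dom[OF \<open>inj v\<close> v] by (auto simp: comp_range_def)
  then have "spikes v UNIV \<circ> \<phi> \<in> comp_range M \<phi>"
    using spikes_comp_in_L2[OF \<open>inj v\<close> v] L2_converges_spikes_truncation[OF \<open>inj v\<close> v]
      closed[unfolded L2_closed_set_def, rule_format, of "\<lambda>n. spikes v {..<n} \<circ> \<phi>"]
    by blast
  then obtain f where "f \<in> comp_dom M \<phi>" "spikes v UNIV \<circ> \<phi> = f \<circ> \<phi>"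
    by (auto simp: comp_range_def)
  then have "spikes v UNIV \<in> L2 M" using comp_\<phi>_cancel[of "spikes v UNIV" f] by (simp add: comp_dom_def)
  then show False using spikes_not_in_L2[OF \<open>inj v\<close> v] by contradiction
qed

lemma comp_left_semi_fredholm_iff:
  "comp_left_semi_fredholm M \<phi> \<longleftrightarrow> (\<exists>b>0. \<forall>y. b \<le> \<rho> y)"
  using comp_closed finite_dim_comp_kernel comp_range_closed comp_range_not_closed
  unfolding comp_left_semi_fredholm_def by (meson not_le)

lemma comp_properties_from_rho_bounds:
  fixes S :: "real set"
  assumes "S \<noteq> {}" and S_pos: "\<And>t. t \<in> S \<Longrightarrow> 0 < t"
    and upper: "\<And>R. (\<forall>y. \<rho> y \<le> R) \<longleftrightarrow> (\<forall>t\<in>S. t \<le> R)"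
    and lower: "\<And>c. (\<forall>y. c \<le> \<rho> y) \<longleftrightarrow> (\<forall>t\<in>S. c \<le> t)"
  shows "(comp_bounded M \<phi> \<longleftrightarrow> bdd_above S) \<and>
    (comp_bounded M \<phi> \<longrightarrow> (comp_norm M \<phi>)\<^sup>2 = Sup S) \<and>
    (\<forall>c::real. c > 0 \<longrightarrow>
       ((\<forall>f \<in> comp_dom M \<phi>. L2norm M (f \<circ> \<phi>) \<ge> c * L2norm M f) \<longleftrightarrow> Inf S \<ge> c\<^sup>2)) \<and>
    (comp_left_semi_fredholm M \<phi> \<longleftrightarrow> Inf S > 0)"
proof -
  have same: "(\<forall>x\<in>range \<rho>. x \<le> R) \<longleftrightarrow> (\<forall>t\<in>S. t \<le> R)" for R
    using upper by simp
  have "bdd_below S" by (rule bdd_belowI[of _ 0]) (simp add: S_pos less_imp_le)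
  then have Inf_ge: "c \<le> Inf S \<longleftrightarrow> (\<forall>y. c \<le> \<rho> y)" for c
    using \<open>S \<noteq> {}\<close> lower by (simp add: le_cInf_iff)
  have "comp_bounded M \<phi> \<longleftrightarrow> bdd_above S"
    using same_upper_bounds_Sup_eq(1)[OF _ \<open>S \<noteq> {}\<close> same] comp_bounded_iff_bdd_above by simp
  moreover have "comp_bounded M \<phi> \<longrightarrow> (comp_norm M \<phi>)\<^sup>2 = Sup S"
    using same_upper_bounds_Sup_eq(2)[OF _ \<open>S \<noteq> {}\<close> same] comp_norm_sq_eq_Sup
      comp_bounded_iff_bdd_above by simp
  moreover have "(\<exists>b>0. \<forall>y. b \<le> \<rho> y) \<longleftrightarrow> 0 < Inf S"
    using Inf_ge by (meson less_le_trans order_refl)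
  ultimately show ?thesis
    using comp_bounded_below_iff Inf_ge comp_left_semi_fredholm_iff by simp
qed

end

section \<open>Directed trees with generation-wise constant valence and weights\<close>

lemma kappa_hat_succ:
  assumes "\<forall>m. \<kappa> m \<ge> 1"
  shows "kappa_hat \<kappa> (m + 1) = real (\<kappa> m) * kappa_hat \<kappa> m"
proof -
  consider "m \<ge> 1" | "m = 0" | "m = -1" | "m \<le> -2" by linarith
  then show ?thesis
  proof cases
    case 1
    then have "{0..m} = insert m {0..m - 1}" by auto
    then show ?thesis using 1 by (simp add: kappa_hat_def)
  next
    case 3
    have "\<kappa> (-1) \<ge> 1" using assms by simp
    then show ?thesis using 3 by (simp add: kappa_hat_def)
  next
    case 4
    then have "{1..-m} = insert (-m) {1..-(m + 1)}" by auto
    moreover have "\<kappa> m \<ge> 1" using assms by simp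
    ultimately show ?thesis using 4 by (simp add: kappa_hat_def)
  qed (simp add: kappa_hat_def)
qed

lemma kappa_hat_pos:
  assumes "\<forall>m. \<kappa> m \<ge> 1"
  shows "0 < kappa_hat \<kappa> m"
proof -
  have "0 < (\<Prod>j\<in>A. real (\<kappa> (f j)))" for A and f :: "int \<Rightarrow> int"
    using assms by (intro prod_pos) (auto intro: less_le_trans[OF zero_less_one])
  from this[of id] this[of uminus] show ?thesis by (simp add: kappa_hat_def)
qed

lemma parent_surj:
  assumes "directed_tree E" "leafless E" "\<forall>x. (\<phi> x, x) \<in> E"
  shows "surj \<phi>"
  unfolding surj_def
proof
  fix x
  obtain y where "(x, y) \<in> E" using \<open>leafless E\<close> unfolding leafless_def by blast
  then have "x = \<phi> y" using assms unfolding directed_tree_def by blast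
  then show "\<exists>y. x = \<phi> y" ..
qed

lemma obtain_generation:
  fixes G :: "int \<Rightarrow> 'v set"
  assumes "surj \<phi>" and disj: "\<forall>m n. m \<noteq> n \<longrightarrow> G m \<inter> G n = {}" and cover: "(\<Union>m. G m) = UNIV"
    and succ: "\<forall>m. G (m + 1) = (\<Union>x\<in>G m. \<phi> -` {x})"
  obtains gen :: "'v \<Rightarrow> int"
  where "\<And>x m. x \<in> G m \<longleftrightarrow> gen x = m" and "\<And>x. gen x = gen (\<phi> x) + 1" and "surj gen"
proof -
  define gen where "gen x = (THE m. x \<in> G m)" for x
  have mem: "x \<in> G m \<longleftrightarrow> gen x = m" for x m
  proof -
    obtain m' where "x \<in> G m'" using cover by blast
    moreover have "m = m'" if "x \<in> G m" for m
      using disj \<open>x \<in> G m'\<close> that by blast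
    ultimately have "gen x = m'" unfolding gen_def by (intro the_equality)
    then show ?thesis using \<open>x \<in> G m'\<close> \<open>\<And>m. x \<in> G m \<Longrightarrow> m = m'\<close> by blast
  qed
  have step: "gen x = gen (\<phi> x) + 1" for x
  proof -
    have "x \<in> G (gen (\<phi> x) + 1)" using succ mem[of "\<phi> x" "gen (\<phi> x)"] by auto
    then show ?thesis by (simp add: mem)
  qed
  have "\<exists>y. gen y = m" for m
  proof (induction m rule: int_induct[where k = "gen undefined"])
    case (step1 i)
    then obtain y where "gen y = i" by blast
    moreover obtain x where "y = \<phi> x" using surjD[OF \<open>surj \<phi>\<close>] by blast
    ultimately have "gen x = i + 1" using step[of x] by simp
    then show ?case by blast
  next
    case (step2 i)
    then obtain y where "gen y = i" by blast
    then have "gen (\<phi> y) = i - 1" using step[of y] by simp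
    then show ?case by blast
  qed blast
  then have "surj gen" unfolding surj_def by metis
  then show ?thesis using that mem step by blast
qed

lemma tree_discrete_composition:
  fixes gen :: "'v \<Rightarrow> int" and \<kappa> :: "int \<Rightarrow> nat" and \<alpha> :: "int \<Rightarrow> real"
  defines "a m \<equiv> \<alpha> m * kappa_hat \<kappa> m"
  assumes sets: "sets M = UNIV" and countable: "countable (UNIV :: 'v set)"
    and pts: "\<forall>x. 0 < emeasure M {x} \<and> emeasure M {x} < \<infinity>"
    and "surj \<phi>" and gen: "\<And>x. gen x = gen (\<phi> x) + 1"
    and \<kappa>_pos: "\<forall>m. \<kappa> m \<ge> 1" and \<alpha>_pos: "\<forall>m. \<alpha> m > 0"
    and card: "\<And>y. card (\<phi> -` {y}) = \<kappa> (gen y)"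
    and \<alpha>_meas: "\<And>x. measure M {x} = \<alpha> (gen x)"
  shows "discrete_composition M \<phi> (\<lambda>y. a (gen y + 1) / a (gen y))"
proof (unfold_locales)
  fix y
  let ?m = "gen y"
  have singleton: "emeasure M {x} = ennreal (\<alpha> (gen x))" for x
  proof -
    have "emeasure M {x} \<noteq> top" using pts by (simp add: less_top)
    then show ?thesis using \<alpha>_meas[of x] by (simp add: emeasure_eq_ennreal_measure)
  qed
  have "\<kappa> ?m \<noteq> 0" using \<kappa>_pos by (metis not_one_le_zero)
  then have "finite (\<phi> -` {y})" using card[of y] card.infinite by force
  then have "emeasure M (\<phi> -` {y}) = (\<Sum>x\<in>\<phi> -` {y}. emeasure M {x})"
    using sets by (intro emeasure_eq_sum_singleton) simp_all
  also have "\<dots> = (\<Sum>x\<in>\<phi> -` {y}. ennreal (\<alpha> (?m + 1)))"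
  proof (rule sum.cong)
    fix x assume "x \<in> \<phi> -` {y}"
    then have "gen x = ?m + 1" using gen[of x] by simp
    then show "emeasure M {x} = ennreal (\<alpha> (?m + 1))" by (simp add: singleton)
  qed simp
  also have "\<dots> = ennreal (real (\<kappa> ?m) * \<alpha> (?m + 1))"
    using card[of y] \<alpha>_pos by (simp add: ennreal_mult' ennreal_of_nat_eq_real_of_nat)
  also have "real (\<kappa> ?m) * \<alpha> (?m + 1) = a (?m + 1) / a ?m * \<alpha> ?m"
    unfolding a_def kappa_hat_succ[OF \<kappa>_pos]
    using \<alpha>_pos[rule_format, of ?m] kappa_hat_pos[OF \<kappa>_pos, of ?m] by (simp add: field_simps)
  finally show "emeasure M (\<phi> -` {y}) = ennreal (a (gen y + 1) / a (gen y)) * emeasure M {y}"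
    using \<alpha>_pos[rule_format, of ?m] by (simp add: singleton flip: ennreal_mult'')
  show "0 < a (gen y + 1) / a (gen y)"
    using \<alpha>_pos kappa_hat_pos[OF \<kappa>_pos] by (simp add: a_def)
qed (use sets countable pts \<open>surj \<phi>\<close> in simp_all)

theorem proposition46:
  fixes E :: "('v \<times> 'v) set" and \<phi> :: "'v \<Rightarrow> 'v" and M :: "'v measure"
    and G :: "int \<Rightarrow> 'v set" and \<kappa> :: "int \<Rightarrow> nat" and \<alpha> :: "int \<Rightarrow> real"
    and \<nu> :: "real measure" and I :: "'i itself"
  assumes tree: "directed_tree E" and "rootless E" and "leafless E"
    and "countable (UNIV :: 'v set)" and "infinite (UNIV :: 'v set)"
    and parent: "\<forall>x. (\<phi> x, x) \<in> E"
    and M_sets: "sets M = UNIV"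
    and M_pts: "\<forall>x. 0 < emeasure M {x} \<and> emeasure M {x} < \<infinity>"
    and G_disj: "\<forall>m n. m \<noteq> n \<longrightarrow> G m \<inter> G n = {}"
    and G_cover: "(\<Union>m. G m) = UNIV"
    and G_succ: "\<forall>m. G (m + 1) = (\<Union>x\<in>G m. \<phi> -` {x})"
    and \<kappa>_pos: "\<forall>m. \<kappa> m \<ge> 1"
    and \<alpha>_pos: "\<forall>m. \<alpha> m > 0"
    and \<kappa>_card: "\<forall>m. \<forall>x\<in>G m. card (\<phi> -` {x}) = \<kappa> m"
    and \<alpha>_meas: "\<forall>m. \<forall>x\<in>G m. measure M {x} = \<alpha> m"
    and subnormal: "comp_subnormal_in I M \<phi>"
    and rep: "representing_measure (\<lambda>m. \<alpha> m * kappa_hat \<kappa> m) \<nu>"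
  shows "msupp \<nu> \<noteq> {} \<and>
    (comp_bounded M \<phi> \<longleftrightarrow> bdd_above (msupp \<nu>)) \<and>
    (comp_bounded M \<phi> \<longrightarrow> (comp_norm M \<phi>)\<^sup>2 = Sup (msupp \<nu>)) \<and>
    (\<forall>c::real. c > 0 \<longrightarrow>
       ((\<forall>f \<in> comp_dom M \<phi>. L2norm M (f \<circ> \<phi>) \<ge> c * L2norm M f) \<longleftrightarrow> Inf (msupp \<nu>) \<ge> c\<^sup>2)) \<and>
    (comp_left_semi_fredholm M \<phi> \<longleftrightarrow> Inf (msupp \<nu>) > 0)"
proof -
  define a where "a m = \<alpha> m * kappa_hat \<kappa> m" for m
  have "surj \<phi>" using parent_surj[OF tree \<open>leafless E\<close> parent] .
  then obtain gen where gen_iff: "\<And>x m. x \<in> G m \<longleftrightarrow> gen x = m"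
    and gen_parent: "\<And>x. gen x = gen (\<phi> x) + 1" and "surj gen"
    using obtain_generation[OF _ G_disj G_cover G_succ] by blast
  define \<rho> where "\<rho> y = a (gen y + 1) / a (gen y)" for y
  have "card (\<phi> -` {y}) = \<kappa> (gen y)" "measure M {y} = \<alpha> (gen y)" for y
    using \<kappa>_card \<alpha>_meas gen_iff by blast+
  then interpret discrete_composition M \<phi> \<rho>
    unfolding \<rho>_def a_def
    using tree_discrete_composition[where gen = gen,
        OF M_sets \<open>countable UNIV\<close> M_pts \<open>surj \<phi>\<close> gen_parent \<kappa>_pos \<alpha>_pos]
    by blast
  interpret two_sided_moments \<nu> a
    using rep \<alpha>_pos kappa_hat_pos[OF \<kappa>_pos]
    by unfold_locales (simp_all add: representing_measure_def a_def)
  have all_gen: "(\<forall>y. P (gen y)) \<longleftrightarrow> (\<forall>m. P m)" for P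
    using \<open>surj gen\<close> by (metis surjD)
  have upper: "(\<forall>y. \<rho> y \<le> R) \<longleftrightarrow> (\<forall>t\<in>msupp \<nu>. t \<le> R)" for R
    using all_gen[of "\<lambda>m. a (m + 1) / a m \<le> R"] moment_pos moment_ratio_le_iff
    by (simp add: \<rho>_def divide_le_eq)
  have lower: "(\<forall>y. c \<le> \<rho> y) \<longleftrightarrow> (\<forall>t\<in>msupp \<nu>. c \<le> t)" for c
    using all_gen[of "\<lambda>m. c \<le> a (m + 1) / a m"] moment_pos moment_ratio_ge_iff
    by (simp add: \<rho>_def le_divide_eq)
  show ?thesis
    using comp_properties_from_rho_bounds[OF msupp_nonempty msupp_pos upper lower] msupp_nonempty
    by simp
qed

end
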